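(* Fix a substructure collection $\mathcal{H}$. Let $C^V$ be the set of functions (on graphs) that can be expressed by a GSN-v with arbitrary depth and width using structural features from $\mathcal{H}$, and $C^E$ the set of functions that can be expressed by a GSN-e with arbitrary depth and width using structural features from $\mathcal{H}$. Then $C^E\supseteq C^V$, i.e. GSN-e is at least as expressive as GSN-v.
   Context: Graphs are finite, simple, with possible vertex features and edge features $\mathbf{e}_{u,v}$. For a (connected) graph $H$, its vertex orbits $O^V_{H,1},\dots,O^V_{H,d_H}$ are the classes of $\mathcal{V}_H$ under $\mathrm{Aut}(H)$; its edge orbits are the classes of ordered pairs $(u,v)$ with $\{u,v\}\in\mathcal{E}_H$ under $(u,v)\mapsto(g(u),g(v))$, $g\in\mathrm{Aut}(H)$. For a graph $G$: $x^V_{H,i}(v)=|\{G_S\subseteq G: G_S\simeq H,\ v\in\mathcal{V}_{G_S},\ f(v)\in O^V_{H,i}\}|$ and $x^E_{H,i}(u,v)=|\{G_S\subseteq G: G_S\simeq H,\ (u,v)\in\mathcal{E}_{G_S},\ (f(u),f(v))\in O^E_{H,i}\}|$, where $f:G_S\to H$ is any isomorphism. $\mathbf{x}^V_v$ and $\mathbf{x}^E_{u,v}$ are the concatenations over $H\in\mathcal{H}$ and all orbits. A GSN layer: $\mathbf{h}^{t+1}_v=\mathrm{UP}^{t+1}(\mathbf{h}^t_v,\mathbf{m}^{t+1}_v)$; for GSN-v, $\mathbf{m}^{t+1}_v=M^{t+1}(\{\!\{(\mathbf{h}^t_v,\mathbf{h}^t_u,\mathbf{x}^V_v,\mathbf{x}^V_u,\mathbf{e}_{u,v})\}\!\}_{u\in\mathcal{N}(v)})$;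 for GSN-e, $\mathbf{m}^{t+1}_v=M^{t+1}(\{\!\{(\mathbf{h}^t_v,\mathbf{h}^t_u,\mathbf{x}^E_{u,v},\mathbf{e}_{u,v})\}\!\}_{u\in\mathcal{N}(v)})$, where $\mathrm{UP}^{t+1}$ is an arbitrary function and $M^{t+1}$ an arbitrary function on multisets; $\mathbf{h}^0_v$ are input vertex features, and the network output is obtained from the final vertex states (with a readout for graph-level functions). *)

theory Defs
  imports Complex_Main "HOL-Library.Multiset"
begin

text \<open>Simple graph skeletons (used for substructures H and for subgraphs G_S):
  a vertex set and a symmetric, irreflexive set of ordered pairs (each undirected
  edge {u,v} appears as both (u,v) and (v,u)).\<close>
record pattern =
  pverts :: "nat set"
  pedges :: "(nat \<times> nat) set"

definition wf_pattern :: "pattern \<Rightarrow> bool" where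
  "wf_pattern P \<longleftrightarrow> finite (pverts P) \<and> pedges P \<subseteq> pverts P \<times> pverts P
     \<and> sym (pedges P) \<and> irrefl (pedges P)"

definition connected_pattern :: "pattern \<Rightarrow> bool" where
  "connected_pattern P \<longleftrightarrow> wf_pattern P \<and> pverts P \<noteq> {}
     \<and> (\<forall>u\<in>pverts P. \<forall>w\<in>pverts P. (u, w) \<in> (pedges P)\<^sup>*)"

record graph =
  verts :: "nat set"
  edges :: "(nat \<times> nat) set"
  vfeat :: "nat \<Rightarrow> real list"
  efeat :: "nat \<Rightarrow> nat \<Rightarrow> real list"

definition skel :: "graph \<Rightarrow> pattern" where
  "skel G = \<lparr>pverts = verts G, pedges = edges G\<rparr>"

definition wf_graph :: "graph \<Rightarrow> bool" where
  "wf_graph G \<longleftrightarrow> wf_pattern (skel G)"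

definition nbrs :: "graph \<Rightarrow> nat \<Rightarrow> nat set" where
  "nbrs G v = {u. (v, u) \<in> edges G}"

definition is_iso :: "(nat \<Rightarrow> nat) \<Rightarrow> pattern \<Rightarrow> pattern \<Rightarrow> bool" where
  "is_iso f P Q \<longleftrightarrow> bij_betw f (pverts P) (pverts Q)
     \<and> (\<forall>u\<in>pverts P. \<forall>w\<in>pverts P. (u, w) \<in> pedges P \<longleftrightarrow> (f u, f w) \<in> pedges Q)"

definition isomorphic :: "pattern \<Rightarrow> pattern \<Rightarrow> bool" where
  "isomorphic P Q \<longleftrightarrow> (\<exists>f. is_iso f P Q)"

definition Aut :: "pattern \<Rightarrow> (nat \<Rightarrow> nat) set" where
  "Aut H = {g. is_iso g H H}"

definition vorbits :: "pattern \<Rightarrow> nat set set" where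
  "vorbits H = {{g x | g. g \<in> Aut H} | x. x \<in> pverts H}"

definition eorbits :: "pattern \<Rightarrow> (nat \<times> nat) set set" where
  "eorbits H = {{(g u, g w) | g. g \<in> Aut H} | u w. (u, w) \<in> pedges H}"

text \<open>(Not necessarily induced) subgraphs of G.\<close>
definition is_subgraph :: "pattern \<Rightarrow> graph \<Rightarrow> bool" where
  "is_subgraph S G \<longleftrightarrow> wf_pattern S \<and> pverts S \<subseteq> verts G \<and> pedges S \<subseteq> edges G"

text \<open>Vertex structural feature x^V_v, represented as the function
  (H, Ob) \<mapsto> x^V_{H,Ob}(v) for H in the collection and Ob a vertex orbit of H
  (and 0 elsewhere); this carries exactly the information of the concatenation.\<close>
definition xV :: "pattern set \<Rightarrow> graph \<Rightarrow> nat \<Rightarrow> pattern \<Rightarrow> nat set \<Rightarrow> nat" where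
  "xV \<H> G v = (\<lambda>H Ob. if H \<in> \<H> \<and> Ob \<in> vorbits H then
      card {S. is_subgraph S G \<and> isomorphic S H \<and> v \<in> pverts S
               \<and> (\<exists>f. is_iso f S H \<and> f v \<in> Ob)}
    else 0)"

definition xE :: "pattern set \<Rightarrow> graph \<Rightarrow> nat \<Rightarrow> nat \<Rightarrow> pattern \<Rightarrow> (nat \<times> nat) set \<Rightarrow> nat" where
  "xE \<H> G u v = (\<lambda>H Ob. if H \<in> \<H> \<and> Ob \<in> eorbits H then
      card {S. is_subgraph S G \<and> isomorphic S H \<and> (u, v) \<in> pedges S
               \<and> (\<exists>f. is_iso f S H \<and> (f u, f v) \<in> Ob)}
    else 0)"

type_synonym vfeatvec = "pattern \<Rightarrow> nat set \<Rightarrow> nat"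
type_synonym efeatvec = "pattern \<Rightarrow> (nat \<times> nat) set \<Rightarrow> nat"

text \<open>Message functions M^{t} (arbitrary functions on multisets) and update
  functions UP^{t} (arbitrary), indexed by the layer t \<ge> 1. States are real
  vectors of arbitrary (layer-dependent) width.\<close>
type_synonym msgV = "nat \<Rightarrow> (real list \<times> real list \<times> vfeatvec \<times> vfeatvec \<times> real list) multiset \<Rightarrow> real list"
type_synonym msgE = "nat \<Rightarrow> (real list \<times> real list \<times> efeatvec \<times> real list) multiset \<Rightarrow> real list"
type_synonym upd = "nat \<Rightarrow> real list \<Rightarrow> real list \<Rightarrow> real list"

fun gsnv_state :: "pattern set \<Rightarrow> msgV \<Rightarrow> upd \<Rightarrow> graph \<Rightarrow> nat \<Rightarrow> nat \<Rightarrow> real list" where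
  "gsnv_state \<H> M UP G 0 v = vfeat G v"
| "gsnv_state \<H> M UP G (Suc t) v =
     UP (Suc t) (gsnv_state \<H> M UP G t v)
       (M (Suc t) (image_mset (\<lambda>u. (gsnv_state \<H> M UP G t v, gsnv_state \<H> M UP G t u,
                                     xV \<H> G v, xV \<H> G u, efeat G u v))
                     (mset_set (nbrs G v))))"

fun gsne_state :: "pattern set \<Rightarrow> msgE \<Rightarrow> upd \<Rightarrow> graph \<Rightarrow> nat \<Rightarrow> nat \<Rightarrow> real list" where
  "gsne_state \<H> M UP G 0 v = vfeat G v"
| "gsne_state \<H> M UP G (Suc t) v =
     UP (Suc t) (gsne_state \<H> M UP G t v)
       (M (Suc t) (image_mset (\<lambda>u. (gsne_state \<H> M UP G t v, gsne_state \<H> M UP G t u,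
                                     xE \<H> G u v, efeat G u v))
                     (mset_set (nbrs G v))))"

definition CV_vertex :: "pattern set \<Rightarrow> (graph \<Rightarrow> nat \<Rightarrow> real list) set" where
  "CV_vertex \<H> = {F. \<exists>T M UP. \<forall>G. wf_graph G \<longrightarrow>
      (\<forall>v\<in>verts G. F G v = gsnv_state \<H> M UP G T v)}"

definition CE_vertex :: "pattern set \<Rightarrow> (graph \<Rightarrow> nat \<Rightarrow> real list) set" where
  "CE_vertex \<H> = {F. \<exists>T M UP. \<forall>G. wf_graph G \<longrightarrow>
      (\<forall>v\<in>verts G. F G v = gsne_state \<H> M UP G T v)}"

definition CV_graph :: "pattern set \<Rightarrow> (graph \<Rightarrow> real list) set" where
  "CV_graph \<H> = {F. \<exists>T M UP R. \<forall>G. wf_graph G \<longrightarrow>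
      F G = R (image_mset (gsnv_state \<H> M UP G T) (mset_set (verts G)))}"

definition CE_graph :: "pattern set \<Rightarrow> (graph \<Rightarrow> real list) set" where
  "CE_graph \<H> = {F. \<exists>T M UP R. \<forall>G. wf_graph G \<longrightarrow>
      F G = R (image_mset (gsne_state \<H> M UP G T) (mset_set (verts G)))}"

definition substructure_collection :: "pattern set \<Rightarrow> bool" where
  "substructure_collection \<H> \<longleftrightarrow> finite \<H> \<and> (\<forall>H\<in>\<H>. connected_pattern H)"

end

theory Submission
  imports Defs
begin

(* Let O be a vertex orbit of a connected pattern H whose vertices have degree d. A copy of H in
   which v plays the role of O contains exactly d edges (u, v), and each of them is mapped into
   exactly one edge orbit of H ending in O. Double counting gives
     d * x^V_{H,O}(v) = sum over neighbours u of v and edge orbits O' ending in O of x^E_{H,O'}(u, v),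
   and if d = 0 then connectedness makes H a single vertex, so x^V_{H,O}(v) = 1. Thus x^V_v is a
   function of the multiset of the x^E_{u,v}. A GSN-e can therefore compute x^V_v in a first layer
   and store it in front of the input features; every further layer reads the stored counts of v and
   of its neighbours and applies the corresponding GSN-v layer, and the last one discards them. *)

section \<open>Isomorphisms and orbits\<close>

lemma is_iso_id: "is_iso id P P"
  unfolding is_iso_def by auto

lemma is_iso_comp: "is_iso f P Q \<Longrightarrow> is_iso g Q R \<Longrightarrow> is_iso (g \<circ> f) P R"
  unfolding is_iso_def by (auto intro: bij_betw_trans simp: bij_betw_apply)

lemma is_iso_inv_into:
  assumes "is_iso f P Q"
  shows "is_iso (inv_into (pverts P) f) Q P"
proof -
  let ?g = "inv_into (pverts P) f"
  have bij: "bij_betw f (pverts P) (pverts Q)"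
    and edge: "\<forall>u\<in>pverts P. \<forall>w\<in>pverts P. (u, w) \<in> pedges P \<longleftrightarrow> (f u, f w) \<in> pedges Q"
    using assms unfolding is_iso_def by auto
  have "(a, c) \<in> pedges Q \<longleftrightarrow> (?g a, ?g c) \<in> pedges P" if "a \<in> pverts Q" "c \<in> pverts Q" for a c
  proof -
    have "?g a \<in> pverts P" "?g c \<in> pverts P" "f (?g a) = a" "f (?g c) = c"
      using that bij by (auto simp: bij_betw_def inv_into_into f_inv_into_f)
    then show ?thesis using edge by metis
  qed
  with bij_betw_inv_into[OF bij] show ?thesis
    unfolding is_iso_def by simp
qed

lemma is_iso_Aut_factor:
  assumes "is_iso f S H" "is_iso g S H"
  shows "\<exists>h\<in>Aut H. \<forall>x\<in>pverts S. g x = h (f x)"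
proof -
  let ?h = "g \<circ> inv_into (pverts S) f"
  have "?h \<in> Aut H"
    using is_iso_comp[OF is_iso_inv_into[OF assms(1)] assms(2)] unfolding Aut_def by blast
  moreover have "\<forall>x\<in>pverts S. g x = ?h (f x)"
    using assms(1) unfolding is_iso_def by (auto simp: bij_betw_def)
  ultimately show ?thesis by blast
qed

lemma id_in_Aut: "id \<in> Aut H"
  unfolding Aut_def using is_iso_id by blast

lemma Aut_comp: "g \<in> Aut H \<Longrightarrow> k \<in> Aut H \<Longrightarrow> k \<circ> g \<in> Aut H"
  unfolding Aut_def using is_iso_comp by blast

definition vorbit :: "pattern \<Rightarrow> nat \<Rightarrow> nat set" where
  "vorbit H x = {g x | g. g \<in> Aut H}"

definition eorbit :: "pattern \<Rightarrow> nat \<Rightarrow> nat \<Rightarrow> (nat \<times> nat) set" where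
  "eorbit H a b = {(g a, g b) | g. g \<in> Aut H}"

lemma vorbits_eq_image: "vorbits H = vorbit H ` pverts H"
  unfolding vorbits_def vorbit_def by auto

lemma eorbits_eq_image: "eorbits H = (\<lambda>(a, b). eorbit H a b) ` pedges H"
  unfolding eorbits_def eorbit_def by auto

lemma vorbit_self: "x \<in> vorbit H x"
  unfolding vorbit_def using id_in_Aut by (metis (mono_tags, lifting) id_apply mem_Collect_eq)

lemma eorbit_self: "(a, b) \<in> eorbit H a b"
  unfolding eorbit_def using id_in_Aut by (metis (mono_tags, lifting) id_apply mem_Collect_eq)

lemma vorbit_Aut_apply:
  assumes "g \<in> Aut H" "x \<in> pverts H"
  shows "vorbit H (g x) = vorbit H x"
proof
  show "vorbit H (g x) \<subseteq> vorbit H x"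
    unfolding vorbit_def by (auto, metis Aut_comp assms(1) comp_apply)
  show "vorbit H x \<subseteq> vorbit H (g x)"
  proof
    fix y assume "y \<in> vorbit H x"
    then obtain k where "k \<in> Aut H" "y = k x" unfolding vorbit_def by auto
    then obtain h where "h \<in> Aut H" "y = h (g x)"
      using is_iso_Aut_factor[of g H H k] assms unfolding Aut_def by blast
    then show "y \<in> vorbit H (g x)" unfolding vorbit_def by blast
  qed
qed

lemma eorbit_Aut_apply:
  assumes "g \<in> Aut H" "a \<in> pverts H" "b \<in> pverts H"
  shows "eorbit H (g a) (g b) = eorbit H a b"
proof
  show "eorbit H (g a) (g b) \<subseteq> eorbit H a b"
    unfolding eorbit_def by (auto, metis Aut_comp assms(1) comp_apply)
  show "eorbit H a b \<subseteq> eorbit H (g a) (g b)"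
  proof
    fix y assume "y \<in> eorbit H a b"
    then obtain k where "k \<in> Aut H" "y = (k a, k b)" unfolding eorbit_def by auto
    then obtain h where "h \<in> Aut H" "y = (h (g a), h (g b))"
      using is_iso_Aut_factor[of g H H k] assms unfolding Aut_def by blast
    then show "y \<in> eorbit H (g a) (g b)" unfolding eorbit_def by blast
  qed
qed

lemma vorbit_eqI: "y \<in> vorbit H x \<Longrightarrow> x \<in> pverts H \<Longrightarrow> vorbit H y = vorbit H x"
  unfolding vorbit_def using vorbit_Aut_apply[unfolded vorbit_def] by blast

lemma eorbit_eqI:
  "(p, q) \<in> eorbit H a b \<Longrightarrow> a \<in> pverts H \<Longrightarrow> b \<in> pverts H \<Longrightarrow> eorbit H p q = eorbit H a b"
  unfolding eorbit_def using eorbit_Aut_apply[unfolded eorbit_def] by blast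

lemma vorbit_snd_eorbit: "(p, q) \<in> eorbit H a b \<Longrightarrow> b \<in> pverts H \<Longrightarrow> vorbit H q = vorbit H b"
  unfolding eorbit_def using vorbit_Aut_apply by blast

section \<open>Copies of a pattern and double counting\<close>

lemma wf_graph_iff:
  "wf_graph G \<longleftrightarrow> finite (verts G) \<and> edges G \<subseteq> verts G \<times> verts G \<and> sym (edges G) \<and> irrefl (edges G)"
  unfolding wf_graph_def wf_pattern_def skel_def by simp

lemma finite_nbrs: "wf_graph G \<Longrightarrow> finite (nbrs G v)"
  unfolding wf_graph_iff nbrs_def by (auto intro: finite_subset[of _ "verts G"])

lemma nbrs_subset_verts: "wf_graph G \<Longrightarrow> nbrs G v \<subseteq> verts G"
  unfolding wf_graph_iff nbrs_def by auto

lemma finite_subgraphs: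
  assumes "wf_graph G"
  shows "finite {S. is_subgraph S G}"
proof -
  have "finite (verts G)" "finite (edges G)"
    using assms unfolding wf_graph_iff by (auto intro: finite_subset[of _ "verts G \<times> verts G"])
  moreover have "{S. is_subgraph S G} \<subseteq> (\<lambda>(V, E). \<lparr>pverts = V, pedges = E\<rparr>) ` (Pow (verts G) \<times> Pow (edges G))"
  proof
    fix S assume "S \<in> {S. is_subgraph S G}"
    then have "(pverts S, pedges S) \<in> Pow (verts G) \<times> Pow (edges G)"
      unfolding is_subgraph_def by auto
    then show "S \<in> (\<lambda>(V, E). \<lparr>pverts = V, pedges = E\<rparr>) ` (Pow (verts G) \<times> Pow (edges G))"
      by (rule rev_image_eqI) simp
  qed
  ultimately show ?thesis by (meson finite_Pow_iff finite_SigmaI finite_imageI finite_subset)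
qed

lemma wf_pattern_edge: "wf_pattern P \<Longrightarrow> (u, v) \<in> pedges P \<Longrightarrow> u \<in> pverts P \<and> v \<in> pverts P"
  unfolding wf_pattern_def by auto

definition degree :: "pattern \<Rightarrow> nat \<Rightarrow> nat" where
  "degree P v = card {u. (u, v) \<in> pedges P}"

lemma degree_iso:
  assumes iso: "is_iso f S H" and "wf_pattern S" "wf_pattern H" and v: "v \<in> pverts S"
  shows "degree H (f v) = degree S v"
proof -
  have bij: "bij_betw f (pverts S) (pverts H)"
    and edge: "\<forall>u\<in>pverts S. \<forall>w\<in>pverts S. (u, w) \<in> pedges S \<longleftrightarrow> (f u, f w) \<in> pedges H"
    using iso unfolding is_iso_def by auto
  have "f ` {u. (u, v) \<in> pedges S} = {a. (a, f v) \<in> pedges H}"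
  proof (intro equalityI subsetI)
    fix a assume "a \<in> {a. (a, f v) \<in> pedges H}"
    moreover from this obtain u where "u \<in> pverts S" "a = f u"
      using bij wf_pattern_edge[OF \<open>wf_pattern H\<close>] unfolding bij_betw_def by blast
    ultimately show "a \<in> f ` {u. (u, v) \<in> pedges S}" using edge v by blast
  qed (use edge wf_pattern_edge[OF \<open>wf_pattern S\<close>] in blast)
  moreover have "inj_on f {u. (u, v) \<in> pedges S}"
    using bij wf_pattern_edge[OF \<open>wf_pattern S\<close>] unfolding bij_betw_def inj_on_def by blast
  ultimately show ?thesis unfolding degree_def by (metis card_image)
qed

definition orbit_degree :: "pattern \<Rightarrow> nat set \<Rightarrow> nat" where
  "orbit_degree H Ob = degree H (SOME b. b \<in> Ob)"

lemma orbit_degree_eq: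
  assumes "Ob \<in> vorbits H" "wf_pattern H" "y \<in> Ob"
  shows "orbit_degree H Ob = degree H y"
proof -
  have Aut_degree: "degree H (g x) = degree H x" if "g \<in> Aut H" "x \<in> pverts H" for g x
    using degree_iso[of g H H x] that assms(2) unfolding Aut_def by auto
  obtain x where x: "x \<in> pverts H" "Ob = vorbit H x" using assms(1) vorbits_eq_image by auto
  have "(SOME b. b \<in> Ob) \<in> Ob" using assms(3) by (rule someI)
  then obtain g where "g \<in> Aut H" "(SOME b. b \<in> Ob) = g x" using x unfolding vorbit_def by auto
  moreover obtain k where "k \<in> Aut H" "y = k x" using x assms(3) unfolding vorbit_def by auto
  ultimately show ?thesis unfolding orbit_degree_def using Aut_degree x(1) by metis
qed

lemma connected_pattern_degree_0:
  assumes H: "connected_pattern H" and x: "x \<in> pverts H" and deg: "degree H x = 0"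
  shows "pverts H = {x} \<and> pedges H = {}"
proof -
  have wf: "wf_pattern H" using H connected_pattern_def by blast
  have "finite {a. (a, x) \<in> pedges H}"
    using wf unfolding wf_pattern_def by (auto intro: finite_subset[of _ "pverts H"])
  with deg have no_edge: "(a, x) \<notin> pedges H" for a unfolding degree_def by auto
  have "w = x" if "w \<in> pverts H" for w
  proof -
    have "(x, w) \<in> (pedges H)\<^sup>*" using H x that unfolding connected_pattern_def by blast
    then show ?thesis
    proof (cases rule: converse_rtranclE)
      case (step c)
      then have "(c, x) \<in> pedges H" using wf unfolding wf_pattern_def sym_def by blast
      with no_edge show ?thesis by blast
    qed simp
  qed
  with x have "pverts H = {x}" by blast
  with wf show ?thesis unfolding wf_pattern_def irrefl_def by auto
qed

definition vcopies :: "graph \<Rightarrow> pattern \<Rightarrow> nat set \<Rightarrow> nat \<Rightarrow> pattern set" where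
  "vcopies G H Ob v = {S. is_subgraph S G \<and> isomorphic S H \<and> v \<in> pverts S
     \<and> (\<exists>f. is_iso f S H \<and> f v \<in> Ob)}"

definition ecopies :: "graph \<Rightarrow> pattern \<Rightarrow> (nat \<times> nat) set \<Rightarrow> nat \<Rightarrow> nat \<Rightarrow> pattern set" where
  "ecopies G H Oe u v = {S. is_subgraph S G \<and> isomorphic S H \<and> (u, v) \<in> pedges S
     \<and> (\<exists>f. is_iso f S H \<and> (f u, f v) \<in> Oe)}"

definition eorbits_into :: "pattern \<Rightarrow> nat set \<Rightarrow> (nat \<times> nat) set set" where
  "eorbits_into H Ob = {Oe \<in> eorbits H. \<exists>a b. (a, b) \<in> Oe \<and> b \<in> Ob}"

lemma xV_eq_card: "H \<in> \<H> \<Longrightarrow> Ob \<in> vorbits H \<Longrightarrow> xV \<H> G v H Ob = card (vcopies G H Ob v)"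
  unfolding xV_def vcopies_def by simp

lemma xE_eq_card: "H \<in> \<H> \<Longrightarrow> Oe \<in> eorbits H \<Longrightarrow> xE \<H> G u v H Oe = card (ecopies G H Oe u v)"
  unfolding xE_def ecopies_def by simp

lemma ecopies_subset_vcopies:
  assumes "Oe \<in> eorbits_into H Ob" "Ob \<in> vorbits H" "wf_pattern H"
  shows "ecopies G H Oe u v \<subseteq> vcopies G H Ob v"
proof
  fix S assume "S \<in> ecopies G H Oe u v"
  then obtain g where g: "is_iso g S H" "(g u, g v) \<in> Oe"
    and S: "is_subgraph S G" "isomorphic S H" "(u, v) \<in> pedges S"
    unfolding ecopies_def by auto
  have "v \<in> pverts S" using S wf_pattern_edge unfolding is_subgraph_def by blast
  obtain a0 b0 where ab0: "(a0, b0) \<in> pedges H" "Oe = eorbit H a0 b0"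
    using assms(1) unfolding eorbits_into_def eorbits_eq_image by auto
  have b0: "b0 \<in> pverts H" using ab0 wf_pattern_edge assms(3) by blast
  obtain a b where ab: "(a, b) \<in> Oe" "b \<in> Ob" using assms(1) unfolding eorbits_into_def by auto
  obtain x where x: "x \<in> pverts H" "Ob = vorbit H x" using assms(2) vorbits_eq_image by auto
  have "vorbit H (g v) = vorbit H b0" using vorbit_snd_eorbit g(2) ab0 b0 by blast
  also have "\<dots> = vorbit H b" using vorbit_snd_eorbit ab ab0 b0 by metis
  also have "\<dots> = Ob" using vorbit_eqI ab x by metis
  finally have "g v \<in> Ob" using vorbit_self by metis
  with S \<open>v \<in> pverts S\<close> g show "S \<in> vcopies G H Ob v" unfolding vcopies_def by blast
qed

lemma card_eorbits_into_ecopies: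
  assumes S: "S \<in> vcopies G H Ob v" and f: "is_iso f S H" "f v \<in> Ob" and H: "wf_pattern H"
  shows "card {Oe \<in> eorbits_into H Ob. S \<in> ecopies G H Oe u v} = of_bool ((u, v) \<in> pedges S)"
proof (cases "(u, v) \<in> pedges S")
  case False
  then show ?thesis unfolding ecopies_def by auto
next
  case True
  have sub: "is_subgraph S G" "isomorphic S H" using S unfolding vcopies_def by auto
  have uv: "u \<in> pverts S" "v \<in> pverts S"
    using True sub wf_pattern_edge unfolding is_subgraph_def by blast+
  have fuv: "(f u, f v) \<in> pedges H" using f(1) uv True unfolding is_iso_def by blast
  then have fuvH: "f u \<in> pverts H" "f v \<in> pverts H" using wf_pattern_edge H by blast+
  have "{Oe \<in> eorbits_into H Ob. S \<in> ecopies G H Oe u v} = {eorbit H (f u) (f v)}"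
  proof (intro equalityI subsetI)
    fix Oe assume "Oe \<in> {Oe \<in> eorbits_into H Ob. S \<in> ecopies G H Oe u v}"
    then have Oe: "Oe \<in> eorbits H" "S \<in> ecopies G H Oe u v" unfolding eorbits_into_def by auto
    obtain a b where ab: "(a, b) \<in> pedges H" "Oe = eorbit H a b" using Oe(1) eorbits_eq_image by auto
    have abH: "a \<in> pverts H" "b \<in> pverts H" using ab wf_pattern_edge H by blast+
    obtain g where g: "is_iso g S H" "(g u, g v) \<in> Oe" using Oe(2) unfolding ecopies_def by auto
    obtain h where h: "h \<in> Aut H" "\<forall>x\<in>pverts S. g x = h (f x)"
      using is_iso_Aut_factor[OF f(1) g(1)] by blast
    have "Oe = eorbit H (g u) (g v)" using eorbit_eqI g(2) ab abH by metis
    also have "\<dots> = eorbit H (f u) (f v)" using h uv eorbit_Aut_apply fuvH by metis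
    finally show "Oe \<in> {eorbit H (f u) (f v)}" by simp
  next
    fix Oe assume "Oe \<in> {eorbit H (f u) (f v)}"
    then have Oe: "Oe = eorbit H (f u) (f v)" by simp
    have "Oe \<in> eorbits_into H Ob"
      unfolding eorbits_into_def using Oe fuv eorbits_eq_image eorbit_self f(2) by fastforce
    moreover have "S \<in> ecopies G H Oe u v"
      unfolding ecopies_def using sub True f(1) Oe eorbit_self by blast
    ultimately show "Oe \<in> {Oe \<in> eorbits_into H Ob. S \<in> ecopies G H Oe u v}" by blast
  qed
  with True show ?thesis by simp
qed

lemma sum_card_eorbits_into_ecopies:
  assumes G: "wf_graph G" and H: "wf_pattern H" and Ob: "Ob \<in> vorbits H"
    and S: "S \<in> vcopies G H Ob v"
  shows "(\<Sum>u\<in>nbrs G v. card {Oe \<in> eorbits_into H Ob. S \<in> ecopies G H Oe u v}) = orbit_degree H Ob"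
proof -
  obtain f where f: "is_iso f S H" "f v \<in> Ob" and sub: "is_subgraph S G" "v \<in> pverts S"
    using S unfolding vcopies_def by auto
  have "nbrs G v \<inter> {u. (u, v) \<in> pedges S} = {u. (u, v) \<in> pedges S}"
    using sub G unfolding is_subgraph_def nbrs_def wf_graph_iff sym_def by blast
  then have "(\<Sum>u\<in>nbrs G v. card {Oe \<in> eorbits_into H Ob. S \<in> ecopies G H Oe u v}) = degree S v"
    using card_eorbits_into_ecopies[OF S f H] finite_nbrs[OF G] by (simp add: degree_def)
  also have "\<dots> = degree H (f v)"
    using degree_iso[OF f(1) _ H sub(2)] sub(1) unfolding is_subgraph_def by simp
  also have "\<dots> = orbit_degree H Ob" using orbit_degree_eq[OF Ob H f(2)] by simp
  finally show ?thesis .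
qed

lemma sum_card_ecopies:
  assumes G: "wf_graph G" and H: "wf_pattern H" and Ob: "Ob \<in> vorbits H"
  shows "(\<Sum>u\<in>nbrs G v. \<Sum>Oe\<in>eorbits_into H Ob. card (ecopies G H Oe u v))
    = orbit_degree H Ob * card (vcopies G H Ob v)"
proof -
  let ?A = "vcopies G H Ob v" and ?E = "eorbits_into H Ob"
  have "finite (pedges H)"
    using H unfolding wf_pattern_def by (auto intro: finite_subset[of _ "pverts H \<times> pverts H"])
  then have fin_E: "finite ?E" unfolding eorbits_into_def eorbits_eq_image by simp
  have fin_A: "finite ?A"
    by (rule finite_subset[OF _ finite_subgraphs[OF G]]) (auto simp: vcopies_def)
  have "card (ecopies G H Oe u v) = (\<Sum>S\<in>?A. of_bool (S \<in> ecopies G H Oe u v))" if "Oe \<in> ?E" for Oe u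
    using ecopies_subset_vcopies[OF that Ob H] fin_A by (simp add: Int_absorb1)
  then have "(\<Sum>u\<in>nbrs G v. \<Sum>Oe\<in>?E. card (ecopies G H Oe u v))
      = (\<Sum>u\<in>nbrs G v. \<Sum>Oe\<in>?E. \<Sum>S\<in>?A. of_bool (S \<in> ecopies G H Oe u v))"
    by simp
  also have "\<dots> = (\<Sum>S\<in>?A. \<Sum>u\<in>nbrs G v. \<Sum>Oe\<in>?E. of_bool (S \<in> ecopies G H Oe u v))"
    by (subst sum.swap) (subst sum.swap, rule refl)
  also have "\<dots> = (\<Sum>S\<in>?A. \<Sum>u\<in>nbrs G v. card {Oe \<in> ?E. S \<in> ecopies G H Oe u v})"
    using fin_E by (simp add: Int_def)
  also have "\<dots> = (\<Sum>S\<in>?A. orbit_degree H Ob)"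
    using sum_card_eorbits_into_ecopies[OF G H Ob] by simp
  finally show ?thesis by simp
qed

lemma vcopies_orbit_degree_0:
  assumes G: "wf_graph G" and v: "v \<in> verts G" and H: "connected_pattern H"
    and Ob: "Ob \<in> vorbits H" and deg: "orbit_degree H Ob = 0"
  shows "vcopies G H Ob v = {\<lparr>pverts = {v}, pedges = {}\<rparr>}"
proof -
  have wf: "wf_pattern H" using H connected_pattern_def by blast
  obtain x where x: "x \<in> pverts H" "Ob = vorbit H x" using Ob vorbits_eq_image by auto
  have "x \<in> Ob" using x vorbit_self by metis
  with deg have "degree H x = 0" using orbit_degree_eq[OF Ob wf] by simp
  then have H1: "pverts H = {x}" "pedges H = {}" using connected_pattern_degree_0[OF H x(1)] by auto
  show ?thesis
  proof (intro equalityI subsetI)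
    fix S assume "S \<in> vcopies G H Ob v"
    then obtain f where f: "is_iso f S H" and sub: "is_subgraph S G" "v \<in> pverts S"
      unfolding vcopies_def by auto
    have "card (pverts S) = 1"
      using bij_betw_same_card[of f "pverts S" "{x}"] f H1 unfolding is_iso_def by simp
    then have "pverts S = {v}" using sub(2) by (metis card_1_singletonE singletonD)
    moreover from this have "pedges S = {}"
      using sub unfolding is_subgraph_def wf_pattern_def irrefl_def by auto
    ultimately show "S \<in> {\<lparr>pverts = {v}, pedges = {}\<rparr>}" by simp
  next
    fix S assume "S \<in> {\<lparr>pverts = {v}, pedges = {}\<rparr>}"
    then have S: "S = \<lparr>pverts = {v}, pedges = {}\<rparr>" by simp
    have "is_iso (\<lambda>_. x) S H" unfolding is_iso_def using S H1 by (simp add: bij_betw_def)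
    moreover have "is_subgraph S G"
      unfolding is_subgraph_def wf_pattern_def using S v by (simp add: sym_def irrefl_def)
    ultimately show "S \<in> vcopies G H Ob v"
      unfolding vcopies_def isomorphic_def using S \<open>x \<in> Ob\<close> by fastforce
  qed
qed

definition xV_of_xE :: "pattern set \<Rightarrow> efeatvec multiset \<Rightarrow> vfeatvec" where
  "xV_of_xE \<H> X = (\<lambda>H Ob. if H \<in> \<H> \<and> Ob \<in> vorbits H then
     (if orbit_degree H Ob = 0 then 1
      else (\<Sum>x\<in>#X. \<Sum>Oe\<in>eorbits_into H Ob. x H Oe) div orbit_degree H Ob)
     else 0)"

lemma xV_eq_xV_of_xE:
  assumes \<H>: "substructure_collection \<H>" and G: "wf_graph G" and v: "v \<in> verts G"
  shows "xV \<H> G v = xV_of_xE \<H> {#xE \<H> G u v. u \<in># mset_set (nbrs G v)#}"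
proof (intro ext)
  fix H Ob
  show "xV \<H> G v H Ob = xV_of_xE \<H> {#xE \<H> G u v. u \<in># mset_set (nbrs G v)#} H Ob"
  proof (cases "H \<in> \<H> \<and> Ob \<in> vorbits H")
    case False
    then show ?thesis unfolding xV_def xV_of_xE_def by auto
  next
    case True
    then have H: "connected_pattern H" using \<H> unfolding substructure_collection_def by blast
    then have wf: "wf_pattern H" unfolding connected_pattern_def by blast
    show ?thesis
    proof (cases "orbit_degree H Ob = 0")
      case True
      with \<open>H \<in> \<H> \<and> Ob \<in> vorbits H\<close> show ?thesis
        using vcopies_orbit_degree_0[OF G v H] by (simp add: xV_eq_card xV_of_xE_def)
    next
      case False
      have "(\<Sum>x\<in>#{#xE \<H> G u v. u \<in># mset_set (nbrs G v)#}. \<Sum>Oe\<in>eorbits_into H Ob. x H Oe)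
          = (\<Sum>u\<in>nbrs G v. \<Sum>Oe\<in>eorbits_into H Ob. xE \<H> G u v H Oe)"
        by (simp add: sum_unfold_sum_mset image_mset.compositionality comp_def)
      also have "\<dots> = (\<Sum>u\<in>nbrs G v. \<Sum>Oe\<in>eorbits_into H Ob. card (ecopies G H Oe u v))"
        using True by (intro sum.cong refl) (simp add: xE_eq_card eorbits_into_def)
      also have "\<dots> = orbit_degree H Ob * xV \<H> G v H Ob"
        using sum_card_ecopies[OF G wf] True by (simp add: xV_eq_card)
      finally show ?thesis using True False by (simp add: xV_of_xE_def)
    qed
  qed
qed

section \<open>Simulating GSN-v by GSN-e\<close>

definition encode :: "('a \<times> 'b) list \<Rightarrow> ('a \<Rightarrow> 'b \<Rightarrow> nat) \<Rightarrow> real list" where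
  "encode ks f = map (\<lambda>(a, b). real (f a b)) ks"

definition decode :: "('a \<times> 'b) list \<Rightarrow> real list \<Rightarrow> 'a \<Rightarrow> 'b \<Rightarrow> nat" where
  "decode ks r = (\<lambda>a b. case map_of (zip ks r) (a, b) of None \<Rightarrow> 0 | Some y \<Rightarrow> nat \<lfloor>y\<rfloor>)"

lemma decode_encode:
  assumes "\<And>a b. (a, b) \<notin> set ks \<Longrightarrow> f a b = 0"
  shows "decode ks (encode ks f) = f"
proof (intro ext)
  fix a b
  have "encode ks f = map (\<lambda>p. real (f (fst p) (snd p))) ks"
    unfolding encode_def by (simp add: case_prod_beta)
  then show "decode ks (encode ks f) a b = f a b"
    unfolding decode_def using assms[of a b] by (simp add: map_of_zip_map)
qed

lemma length_encode [simp]: "length (encode ks f) = length ks"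
  unfolding encode_def by simp

definition feature_keys :: "pattern set \<Rightarrow> (pattern \<times> nat set) list" where
  "feature_keys \<H> = (SOME ks. set ks = Sigma \<H> vorbits)"

lemma set_feature_keys:
  assumes "substructure_collection \<H>"
  shows "set (feature_keys \<H>) = Sigma \<H> vorbits"
proof -
  have "finite (Sigma \<H> vorbits)"
    using assms unfolding substructure_collection_def connected_pattern_def wf_pattern_def
    by (auto simp: vorbits_eq_image intro!: finite_SigmaI)
  then show ?thesis unfolding feature_keys_def by (metis (mono_tags) finite_list someI_ex)
qed

lemma decode_encode_xV:
  "substructure_collection \<H> \<Longrightarrow>
    decode (feature_keys \<H>) (encode (feature_keys \<H>) (xV \<H> G v)) = xV \<H> G v"
  by (rule decode_encode) (auto simp: set_feature_keys xV_def)

definition unpack_msg ::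
  "pattern set \<Rightarrow> real list \<times> real list \<times> efeatvec \<times> real list
     \<Rightarrow> real list \<times> real list \<times> vfeatvec \<times> vfeatvec \<times> real list" where
  "unpack_msg \<H> = (\<lambda>(hv, hu, _, e).
     (drop (length (feature_keys \<H>)) hv, drop (length (feature_keys \<H>)) hu,
      decode (feature_keys \<H>) (take (length (feature_keys \<H>)) hv),
      decode (feature_keys \<H>) (take (length (feature_keys \<H>)) hu), e))"

definition sim_msg :: "pattern set \<Rightarrow> msgV \<Rightarrow> msgE" where
  "sim_msg \<H> M t X =
     (if t = 1 then encode (feature_keys \<H>) (xV_of_xE \<H> (image_mset (\<lambda>(_, _, x, _). x) X))
      else M (t - 1) (image_mset (unpack_msg \<H>) X))"

text \<open>The state of the simulating network after layer \<open>t + 1\<close> is the code of \<open>x\<^sup>V\<^sub>v\<close>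
  followed by the state of the GSN-v after layer \<open>t\<close>; the last layer \<open>T + 1\<close> drops the code.\<close>
definition sim_upd :: "pattern set \<Rightarrow> nat \<Rightarrow> upd \<Rightarrow> upd" where
  "sim_upd \<H> T UP t h m =
     (if t = Suc T then [] else if t = 1 then m else take (length (feature_keys \<H>)) h)
     @ (if t = 1 then h else UP (t - 1) (drop (length (feature_keys \<H>)) h) m)"

lemma sim_msg_Suc_Suc: "sim_msg \<H> M (Suc (Suc t)) X = M (Suc t) (image_mset (unpack_msg \<H>) X)"
  unfolding sim_msg_def by simp

lemma sim_upd_Suc_Suc:
  "sim_upd \<H> T UP (Suc (Suc t)) h m =
     (if Suc t = T then [] else take (length (feature_keys \<H>)) h)
     @ UP (Suc t) (drop (length (feature_keys \<H>)) h) m"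
  unfolding sim_upd_def by simp

lemma gsne_sim_state:
  assumes \<H>: "substructure_collection \<H>" and G: "wf_graph G"
  shows "t \<le> T \<Longrightarrow> v \<in> verts G \<Longrightarrow>
    gsne_state \<H> (sim_msg \<H> M) (sim_upd \<H> T UP) G (Suc t) v
      = (if t = T then [] else encode (feature_keys \<H>) (xV \<H> G v)) @ gsnv_state \<H> M UP G t v"
proof (induction t arbitrary: v)
  case 0
  then show ?case
    using xV_eq_xV_of_xE[OF \<H> G]
    by (simp add: sim_msg_def sim_upd_def image_mset.compositionality comp_def)
next
  case (Suc t)
  let ?se = "gsne_state \<H> (sim_msg \<H> M) (sim_upd \<H> T UP) G (Suc t)"
  let ?sv = "gsnv_state \<H> M UP G t"
  have state: "?se u = encode (feature_keys \<H>) (xV \<H> G u) @ ?sv u" if "u \<in> verts G" for u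
    using Suc.IH[OF _ that] Suc.prems(1) by (simp del: gsne_state.simps gsnv_state.simps)
  have msgs:
    "image_mset (unpack_msg \<H>) {#(?se v, ?se u, xE \<H> G u v, efeat G u v). u \<in># mset_set (nbrs G v)#}
      = {#(?sv v, ?sv u, xV \<H> G v, xV \<H> G u, efeat G u v). u \<in># mset_set (nbrs G v)#}"
    unfolding image_mset.compositionality
  proof (rule image_mset_cong)
    fix u assume "u \<in># mset_set (nbrs G v)"
    then have "u \<in> verts G" using finite_nbrs[OF G] nbrs_subset_verts[OF G] by auto
    then show "(unpack_msg \<H> \<circ> (\<lambda>u. (?se v, ?se u, xE \<H> G u v, efeat G u v))) u
        = (?sv v, ?sv u, xV \<H> G v, xV \<H> G u, efeat G u v)"
      using state Suc.prems(2) decode_encode_xV[OF \<H>] by (simp add: unpack_msg_def)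
  qed
  have "gsne_state \<H> (sim_msg \<H> M) (sim_upd \<H> T UP) G (Suc (Suc t)) v
      = sim_upd \<H> T UP (Suc (Suc t)) (?se v)
          (sim_msg \<H> M (Suc (Suc t))
            {#(?se v, ?se u, xE \<H> G u v, efeat G u v). u \<in># mset_set (nbrs G v)#})"
    by (rule gsne_state.simps(2))
  also have "\<dots> = (if Suc t = T then [] else encode (feature_keys \<H>) (xV \<H> G v))
      @ UP (Suc t) (?sv v)
          (M (Suc t) {#(?sv v, ?sv u, xV \<H> G v, xV \<H> G u, efeat G u v). u \<in># mset_set (nbrs G v)#})"
    unfolding sim_upd_Suc_Suc sim_msg_Suc_Suc msgs unfolding state[OF Suc.prems(2)] by simp
  also have "\<dots> = (if Suc t = T then [] else encode (feature_keys \<H>) (xV \<H> G v))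
      @ gsnv_state \<H> M UP G (Suc t) v"
    by simp
  finally show ?case .
qed

lemma gsne_simulates_gsnv:
  assumes "substructure_collection \<H>"
  shows "\<exists>T' Me UPe. \<forall>G. wf_graph G \<longrightarrow>
    (\<forall>v\<in>verts G. gsne_state \<H> Me UPe G T' v = gsnv_state \<H> M UP G T v)"
proof (intro exI allI impI ballI)
  fix G v assume "wf_graph G" "v \<in> verts G"
  then show "gsne_state \<H> (sim_msg \<H> M) (sim_upd \<H> T UP) G (Suc T) v = gsnv_state \<H> M UP G T v"
    using gsne_sim_state[OF assms, of G T T v] by (simp del: gsne_state.simps)
qed

theorem theorem3p3:
  assumes "substructure_collection \<H>"
  shows "CV_vertex \<H> \<subseteq> CE_vertex \<H> \<and> CV_graph \<H> \<subseteq> CE_graph \<H>"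
proof (intro conjI subsetI)
  fix F assume "F \<in> CV_vertex \<H>"
  then obtain T M UP where F: "\<forall>G. wf_graph G \<longrightarrow> (\<forall>v\<in>verts G. F G v = gsnv_state \<H> M UP G T v)"
    unfolding CV_vertex_def by blast
  obtain T' Me UPe where
    sim: "\<forall>G. wf_graph G \<longrightarrow> (\<forall>v\<in>verts G. gsne_state \<H> Me UPe G T' v = gsnv_state \<H> M UP G T v)"
    using gsne_simulates_gsnv[OF assms] by blast
  have "\<forall>G. wf_graph G \<longrightarrow> (\<forall>v\<in>verts G. F G v = gsne_state \<H> Me UPe G T' v)"
    using F sim by simp
  then show "F \<in> CE_vertex \<H>" unfolding CE_vertex_def by blast
next
  fix F assume "F \<in> CV_graph \<H>"
  then obtain T M UP R
    where F: "\<forall>G. wf_graph G \<longrightarrow> F G = R (image_mset (gsnv_state \<H> M UP G T) (mset_set (verts G)))"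
    unfolding CV_graph_def by blast
  obtain T' Me UPe where
    sim: "\<forall>G. wf_graph G \<longrightarrow> (\<forall>v\<in>verts G. gsne_state \<H> Me UPe G T' v = gsnv_state \<H> M UP G T v)"
    using gsne_simulates_gsnv[OF assms] by blast
  have "image_mset (gsne_state \<H> Me UPe G T') (mset_set (verts G))
      = image_mset (gsnv_state \<H> M UP G T) (mset_set (verts G))" if "wf_graph G" for G
    using sim that by (intro image_mset_cong) (simp add: wf_graph_iff)
  with F have "\<forall>G. wf_graph G \<longrightarrow> F G = R (image_mset (gsne_state \<H> Me UPe G T') (mset_set (verts G)))"
    by simp
  then show "F \<in> CE_graph \<H>" unfolding CE_graph_def by blast
qed

end
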